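(* Let $A$ be a sequence algebra. If a normed $A$-module $X$ is essential and homogeneous, then its completion $\overline X$ is also essential and homogeneous.
   Context: Modules are contractive ($\|a\cdot x\|\le\|a\|\|x\|$); the completion carries the continuously extended action. A sequence algebra is a normed algebra of complex sequences with coordinatewise operations containing $c_{00}$ as a dense subalgebra, with $\|\mathbf p^n\|=1$, where $\mathbf p^n$ has $1$ in place $n$ and $0$ elsewhere. For $x\in X$, $x_n:=\mathbf p^n\cdot x$. $X$ is essential if the closed linear span of $\{a\cdot x\}$ is $X$; homogeneous if $\|x_n\|\le\|y_n\|$ for all $n$ implies $\|x\|\le\|y\|$. *)

theory Defs
  imports "HOL-Analysis.Analysis"
begin

definition c00 :: "(nat \<Rightarrow> complex) set" where
  "c00 = {a. finite {n. a n \<noteq> 0}}"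

definition pvec :: "nat \<Rightarrow> nat \<Rightarrow> complex" where
  "pvec n = (\<lambda>k. if k = n then 1 else 0)"

definition seq_algebra :: "(nat \<Rightarrow> complex) set \<Rightarrow> ((nat \<Rightarrow> complex) \<Rightarrow> real) \<Rightarrow> bool" where
  "seq_algebra A nA \<longleftrightarrow>
     (\<forall>a\<in>A. \<forall>b\<in>A. (\<lambda>n. a n + b n) \<in> A \<and> (\<lambda>n. a n * b n) \<in> A) \<and>
     (\<forall>c. \<forall>a\<in>A. (\<lambda>n. c * a n) \<in> A) \<and>
     (\<forall>a\<in>A. 0 \<le> nA a \<and> (nA a = 0 \<longleftrightarrow> a = (\<lambda>n. 0))) \<and>
     (\<forall>a\<in>A. \<forall>b\<in>A. nA (\<lambda>n. a n + b n) \<le> nA a + nA b) \<and>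
     (\<forall>a\<in>A. \<forall>b\<in>A. nA (\<lambda>n. a n * b n) \<le> nA a * nA b) \<and>
     (\<forall>c. \<forall>a\<in>A. nA (\<lambda>n. c * a n) = norm c * nA a) \<and>
     c00 \<subseteq> A \<and>
     (\<forall>a\<in>A. \<forall>e>0. \<exists>b\<in>c00. nA (\<lambda>n. a n - b n) < e) \<and>
     (\<forall>n. nA (pvec n) = 1)"

text \<open>Complex scalar multiplication sm on a real normed vector space, compatible with
the real structure and the norm (i.e. a complex normed space).\<close>
definition complex_scaling :: "(complex \<Rightarrow> 'x::real_normed_vector \<Rightarrow> 'x) \<Rightarrow> bool" where
  "complex_scaling sm \<longleftrightarrow>
     (\<forall>c x y. sm c (x + y) = sm c x + sm c y) \<and>
     (\<forall>c d x. sm (c + d) x = sm c x + sm d x) \<and>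
     (\<forall>c d x. sm (c * d) x = sm c (sm d x)) \<and>
     (\<forall>r x. sm (complex_of_real r) x = r *\<^sub>R x) \<and>
     (\<forall>c x. norm (sm c x) = norm c * norm x)"

definition normed_module ::
  "(nat \<Rightarrow> complex) set \<Rightarrow> ((nat \<Rightarrow> complex) \<Rightarrow> real) \<Rightarrow>
   (complex \<Rightarrow> 'x::real_normed_vector \<Rightarrow> 'x) \<Rightarrow> ((nat \<Rightarrow> complex) \<Rightarrow> 'x \<Rightarrow> 'x) \<Rightarrow> bool" where
  "normed_module A nA sm act \<longleftrightarrow>
     complex_scaling sm \<and>
     (\<forall>a\<in>A. \<forall>x y. act a (x + y) = act a x + act a y) \<and>
     (\<forall>a\<in>A. \<forall>c x. act a (sm c x) = sm c (act a x)) \<and>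
     (\<forall>a\<in>A. \<forall>b\<in>A. \<forall>x. act (\<lambda>n. a n + b n) x = act a x + act b x) \<and>
     (\<forall>a\<in>A. \<forall>c x. act (\<lambda>n. c * a n) x = sm c (act a x)) \<and>
     (\<forall>a\<in>A. \<forall>b\<in>A. \<forall>x. act (\<lambda>n. a n * b n) x = act a (act b x)) \<and>
     (\<forall>a\<in>A. \<forall>x. norm (act a x) \<le> nA a * norm x)"

definition cspan :: "(complex \<Rightarrow> 'x::real_normed_vector \<Rightarrow> 'x) \<Rightarrow> 'x set \<Rightarrow> 'x set" where
  "cspan sm S = {x. \<exists>F c. finite F \<and> F \<subseteq> S \<and> x = (\<Sum>s\<in>F. sm (c s) s)}"

definition essential_module ::
  "(nat \<Rightarrow> complex) set \<Rightarrow> (complex \<Rightarrow> 'x::real_normed_vector \<Rightarrow> 'x) \<Rightarrow>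
   ((nat \<Rightarrow> complex) \<Rightarrow> 'x \<Rightarrow> 'x) \<Rightarrow> bool" where
  "essential_module A sm act \<longleftrightarrow>
     closure (cspan sm {act a x | a x. a \<in> A}) = UNIV"

definition homogeneous_module :: "((nat \<Rightarrow> complex) \<Rightarrow> 'x::real_normed_vector \<Rightarrow> 'x) \<Rightarrow> bool" where
  "homogeneous_module act \<longleftrightarrow>
     (\<forall>x y. (\<forall>n. norm (act (pvec n) x) \<le> norm (act (pvec n) y)) \<longrightarrow> norm x \<le> norm y)"

text \<open>Completions are unique
up to isometric isomorphism, so this characterises the completion.\<close>
definition module_completion ::
  "(nat \<Rightarrow> complex) set \<Rightarrow> ((nat \<Rightarrow> complex) \<Rightarrow> real) \<Rightarrow>
   (complex \<Rightarrow> 'x::real_normed_vector \<Rightarrow> 'x) \<Rightarrow> ((nat \<Rightarrow> complex) \<Rightarrow> 'x \<Rightarrow> 'x) \<Rightarrow>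
   (complex \<Rightarrow> 'y::banach \<Rightarrow> 'y) \<Rightarrow> ((nat \<Rightarrow> complex) \<Rightarrow> 'y \<Rightarrow> 'y) \<Rightarrow> ('x \<Rightarrow> 'y) \<Rightarrow> bool" where
  "module_completion A nA sm act smY actY J \<longleftrightarrow>
     normed_module A nA smY actY \<and>
     (\<forall>x y. J (x + y) = J x + J y) \<and>
     (\<forall>c x. J (sm c x) = smY c (J x)) \<and>
     (\<forall>x. norm (J x) = norm x) \<and>
     closure (range J) = UNIV \<and>
     (\<forall>a\<in>A. \<forall>x. actY a (J x) = J (act a x))"

end

theory Submission
  imports Defs
begin

text \<open>
  The key notion is that of a finitely supported vector: one fixed by the coordinate
  projection onto a finite set F of indices.  For any normed module X over a sequence
  algebra we show that essentiality makes the finitely supported vectors dense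
  (every generator a x is approximated by b x with b in c00), and that homogeneity then
  only has to be checked on finitely supported vectors.  We also prove a stability
  form of homogeneity: approximate coordinate domination still gives an approximate
  norm inequality.

  For the completion Y of X, essentiality transfers because the isometry J maps the
  dense span of generators of X into the span of generators of Y.  For homogeneity,
  a finitely supported y and an arbitrary z in Y are approximated by vectors of X;
  stability of homogeneity in X gives the inequality up to errors that vanish in the
  limit.  Density of finitely supported vectors in the (now essential) Y finishes it.
\<close>

lemma subspace_closure:
  fixes S :: "'a::real_normed_vector set"
  assumes S: "subspace S"
  shows "subspace (closure S)"
proof (rule subspaceI)
  show "0 \<in> closure S" using S closure_subset subspace_0 by blast
next
  fix x y assume "x \<in> closure S" "y \<in> closure S"
  hence "x + y \<in> closure S + closure S" by (rule set_plus_intro)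
  also have "\<dots> \<subseteq> closure (S + S)" by (rule closure_sum)
  also have "\<dots> \<subseteq> closure S"
    using S by (intro closure_mono) (auto simp: set_plus_def subspace_add)
  finally show "x + y \<in> closure S" .
next
  fix c x assume "x \<in> closure S"
  hence "c *\<^sub>R x \<in> (*\<^sub>R) c ` closure S" by blast
  also have "\<dots> = closure ((*\<^sub>R) c ` S)" by (rule closure_scaleR)
  also have "\<dots> \<subseteq> closure S" using S by (intro closure_mono) (auto simp: subspace_scale)
  finally show "c *\<^sub>R x \<in> closure S" .
qed

lemma cspan_mono:
  assumes "S \<subseteq> T"
  shows "cspan sm S \<subseteq> cspan sm T"
proof
  fix x assume "x \<in> cspan sm S"
  then obtain F c where "finite F" "F \<subseteq> S" "x = (\<Sum>s\<in>F. sm (c s) s)"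
    unfolding cspan_def by blast
  thus "x \<in> cspan sm T" unfolding cspan_def using assms by blast
qed

text \<open>The indicator sequence of a set of indices; for finite F it lies in c00, and its
  action is the coordinate projection onto F.\<close>
definition indf :: "nat set \<Rightarrow> nat \<Rightarrow> complex" where
  "indf F = (\<lambda>n. if n \<in> F then 1 else 0)"

definition fin_supported :: "((nat \<Rightarrow> complex) \<Rightarrow> 'x \<Rightarrow> 'x) \<Rightarrow> 'x set" where
  "fin_supported act = {x. \<exists>F. finite F \<and> act (indf F) x = x}"

locale seq_module =
  fixes A :: "(nat \<Rightarrow> complex) set" and nA :: "(nat \<Rightarrow> complex) \<Rightarrow> real"
    and sm :: "complex \<Rightarrow> 'x::real_normed_vector \<Rightarrow> 'x"
    and act :: "(nat \<Rightarrow> complex) \<Rightarrow> 'x \<Rightarrow> 'x"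
  assumes alg: "seq_algebra A nA" and mdl: "normed_module A nA sm act"
begin

lemma c00_in_A: "c00 \<subseteq> A"
  using alg unfolding seq_algebra_def by blast

lemma c00_dense: "a \<in> A \<Longrightarrow> e > 0 \<Longrightarrow> \<exists>b\<in>c00. nA (\<lambda>n. a n - b n) < e"
  using alg unfolding seq_algebra_def by blast

lemma indf_A: "finite F \<Longrightarrow> indf F \<in> A"
  using c00_in_A unfolding c00_def indf_def by (auto elim: finite_subset[rotated])

lemma pvec_indf: "pvec n = indf {n}"
  by (auto simp: pvec_def indf_def)

lemma pvec_A: "pvec n \<in> A"
  by (simp add: pvec_indf indf_A)

lemma seq_add_A: "a \<in> A \<Longrightarrow> b \<in> A \<Longrightarrow> (\<lambda>n. a n + b n) \<in> A"
  using alg unfolding seq_algebra_def by blast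

lemma seq_cmult_A: "a \<in> A \<Longrightarrow> (\<lambda>n. c * a n) \<in> A"
  using alg unfolding seq_algebra_def by blast

lemma nA_pvec: "nA (pvec n) = 1"
  using alg unfolding seq_algebra_def by blast

lemma nA_nonneg: "a \<in> A \<Longrightarrow> 0 \<le> nA a"
  using alg unfolding seq_algebra_def by blast

lemma sm_real: "sm (complex_of_real r) x = r *\<^sub>R x"
  using mdl unfolding normed_module_def complex_scaling_def by blast

lemma act_add: "a \<in> A \<Longrightarrow> act a (x + y) = act a x + act a y"
  using mdl unfolding normed_module_def by blast

lemma act_diff: "a \<in> A \<Longrightarrow> act a (x - y) = act a x - act a y"
  using act_add[of a "x - y" y] by (simp add: algebra_simps)

lemma act_zero: "a \<in> A \<Longrightarrow> act a 0 = 0"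
  using act_diff[of a 0 0] by simp

lemma act_scaleR: "a \<in> A \<Longrightarrow> act a (r *\<^sub>R x) = r *\<^sub>R act a x"
  using mdl unfolding normed_module_def by (metis sm_real)

lemma act_cmult: "a \<in> A \<Longrightarrow> act (\<lambda>n. c * a n) x = sm c (act a x)"
  using mdl unfolding normed_module_def by blast

lemma act_mult: "a \<in> A \<Longrightarrow> b \<in> A \<Longrightarrow> act a (act b x) = act (\<lambda>n. a n * b n) x"
  using mdl unfolding normed_module_def by metis

lemma act_seq_add: "a \<in> A \<Longrightarrow> b \<in> A \<Longrightarrow> act (\<lambda>n. a n + b n) x = act a x + act b x"
  using mdl unfolding normed_module_def by blast

lemma act_norm: "a \<in> A \<Longrightarrow> norm (act a x) \<le> nA a * norm x"
  using mdl unfolding normed_module_def by blast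

lemma act_seq_diff:
  assumes a: "a \<in> A" and b: "b \<in> A"
  shows "(\<lambda>n. a n - b n) \<in> A" and "act (\<lambda>n. a n - b n) x = act a x - act b x"
proof -
  have mb: "(\<lambda>n. (-1) * b n) \<in> A" using seq_cmult_A[OF b] .
  have "(\<lambda>n. a n + (-1) * b n) \<in> A" using seq_add_A[OF a mb] .
  thus "(\<lambda>n. a n - b n) \<in> A" by simp
  have "act (\<lambda>n. a n + (-1) * b n) x = act a x + sm (-1) (act b x)"
    by (simp only: act_seq_add[OF a mb] act_cmult[OF b])
  thus "act (\<lambda>n. a n - b n) x = act a x - act b x"
    using sm_real[of "-1"] by simp
qed

lemma act_indf_empty: "act (indf {}) x = 0"
  using act_cmult[OF indf_A[of "{}"], of 0 x] sm_real[of 0] by (simp add: indf_def)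

lemma act_indf_indf:
  "finite F \<Longrightarrow> finite G \<Longrightarrow> act (indf F) (act (indf G) x) = act (indf (F \<inter> G)) x"
proof -
  assume "finite F" "finite G"
  moreover have "(\<lambda>n. indf F n * indf G n) = indf (F \<inter> G)"
    by (auto simp: indf_def)
  ultimately show ?thesis using act_mult[OF indf_A indf_A] by metis
qed

lemma act_pvec_indf:
  "finite F \<Longrightarrow> act (pvec n) (act (indf F) x) = (if n \<in> F then act (pvec n) x else 0)"
  by (simp add: pvec_indf act_indf_indf act_indf_empty)

lemma act_indf_sum: "finite H \<Longrightarrow> act (indf H) x = (\<Sum>n\<in>H. act (pvec n) x)"
proof (induction H rule: finite_induct)
  case empty
  show ?case by (simp add: act_indf_empty)
next
  case (insert n H)
  have "indf (insert n H) = (\<lambda>k. pvec n k + indf H k)"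
    using insert(2) by (auto simp: indf_def pvec_def)
  hence "act (indf (insert n H)) x = act (pvec n) x + act (indf H) x"
    using act_seq_add[OF pvec_A indf_A[OF insert(1)]] by simp
  with insert show ?case by simp
qed

lemma norm_act_indf_le:
  assumes "finite H" and "\<And>n. n \<in> H \<Longrightarrow> norm (act (pvec n) x) \<le> B"
  shows "norm (act (indf H) x) \<le> real (card H) * B"
proof -
  have "norm (act (indf H) x) \<le> (\<Sum>n\<in>H. norm (act (pvec n) x))"
    unfolding act_indf_sum[OF assms(1)] by (rule norm_sum)
  also have "\<dots> \<le> real (card H) * B"
    using assms(2) by (rule sum_bounded_above)
  finally show ?thesis .
qed

text \<open>Each coordinate map is contractive, so coordinates move by at most the distance.\<close>
lemma coord_le_shift:
  "norm (act (pvec n) x) \<le> norm (act (pvec n) x') + norm (x - x')"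
proof -
  have "act (pvec n) x = act (pvec n) x' + act (pvec n) (x - x')"
    by (simp add: act_diff[OF pvec_A])
  hence "norm (act (pvec n) x) \<le> norm (act (pvec n) x') + norm (act (pvec n) (x - x'))"
    by (metis norm_triangle_ineq)
  also have "norm (act (pvec n) (x - x')) \<le> norm (x - x')"
    using act_norm[OF pvec_A, of n "x - x'"] by (simp add: nA_pvec)
  finally show ?thesis by simp
qed

lemma coord_truncation_le:
  "finite F \<Longrightarrow> norm (act (pvec n) (act (indf F) x)) \<le> norm (act (pvec n) x)"
  by (simp add: act_pvec_indf)

lemma truncation_idem: "finite F \<Longrightarrow> act (indf F) (act (indf F) x) = act (indf F) x"
  by (simp add: act_indf_indf)

lemma fixed_by_larger_truncation:
  assumes "finite G" "F \<subseteq> G" "act (indf F) x = x"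
  shows "act (indf G) x = x"
proof -
  have "act (indf G) x = act (indf G) (act (indf F) x)" using assms(3) by simp
  also have "\<dots> = act (indf F) x"
    using assms(1,2) by (simp add: act_indf_indf[OF assms(1) finite_subset] Int_absorb1)
  finally show ?thesis using assms(3) by simp
qed

lemma subspace_fin_supported: "subspace (fin_supported act)"
proof (rule subspaceI)
  show "0 \<in> fin_supported act"
    unfolding fin_supported_def using act_zero[OF indf_A[of "{}"]] by blast
next
  fix x y assume "x \<in> fin_supported act" "y \<in> fin_supported act"
  then obtain F G where F: "finite F" "act (indf F) x = x" and G: "finite G" "act (indf G) y = y"
    unfolding fin_supported_def by blast
  have FG: "finite (F \<union> G)" using F(1) G(1) by simp
  have "act (indf (F \<union> G)) x = x" "act (indf (F \<union> G)) y = y"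
    by (rule fixed_by_larger_truncation[OF FG _ F(2)], simp)
       (rule fixed_by_larger_truncation[OF FG _ G(2)], simp)
  hence "act (indf (F \<union> G)) (x + y) = x + y"
    by (simp add: act_add[OF indf_A[OF FG]])
  thus "x + y \<in> fin_supported act"
    unfolding fin_supported_def using F(1) G(1) by blast
next
  fix c x assume "x \<in> fin_supported act"
  then obtain F where F: "finite F" "act (indf F) x = x" unfolding fin_supported_def by blast
  hence "act (indf F) (c *\<^sub>R x) = c *\<^sub>R x" by (simp add: act_scaleR[OF indf_A])
  thus "c *\<^sub>R x \<in> fin_supported act"
    unfolding fin_supported_def using F(1) by blast
qed

text \<open>Approximating a by finitely supported sequences shows that every vector a x is a
  limit of finitely supported vectors.\<close>
lemma act_in_closure_fin_supported:
  assumes a: "a \<in> A"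
  shows "act a x \<in> closure (fin_supported act)"
  unfolding closure_approachable
proof (intro allI impI)
  fix e :: real assume e: "e > 0"
  have "e / (norm x + 1) > 0" using e by (simp add: add_nonneg_pos)
  then obtain b where b: "b \<in> c00" and ab: "nA (\<lambda>n. a n - b n) < e / (norm x + 1)"
    using c00_dense[OF a] by blast
  have bA: "b \<in> A" using b c00_in_A by blast
  define F where "F = {n. b n \<noteq> 0}"
  have F: "finite F" using b unfolding c00_def F_def by simp
  have "(\<lambda>n. indf F n * b n) = b" by (auto simp: indf_def F_def)
  hence "act (indf F) (act b x) = act b x" using act_mult[OF indf_A[OF F] bA] by simp
  hence fs: "act b x \<in> fin_supported act" unfolding fin_supported_def using F by blast
  have "dist (act b x) (act a x) = norm (act (\<lambda>n. a n - b n) x)"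
    by (simp add: dist_norm norm_minus_commute act_seq_diff[OF a bA])
  also have "\<dots> \<le> nA (\<lambda>n. a n - b n) * norm x" by (rule act_norm[OF act_seq_diff(1)[OF a bA]])
  also have "\<dots> \<le> e / (norm x + 1) * norm x" using ab by (intro mult_right_mono) auto
  also have "\<dots> < e"
  proof -
    have "norm x / (norm x + 1) < 1" by (simp add: divide_less_eq_1_pos add_nonneg_pos)
    hence "e * (norm x / (norm x + 1)) < e * 1" by (rule mult_strict_left_mono[OF _ e])
    thus ?thesis by simp
  qed
  finally show "\<exists>y\<in>fin_supported act. dist y (act a x) < e" using fs by blast
qed

text \<open>In an essential module the finitely supported vectors are dense: the closure of
  this subspace contains all generators a x and therefore their complex span.\<close>
lemma essential_imp_fin_supported_dense:
  assumes "essential_module A sm act"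
  shows "closure (fin_supported act) = UNIV"
proof -
  have "cspan sm {act a x | a x. a \<in> A} \<subseteq> closure (fin_supported act)"
  proof
    fix y assume "y \<in> cspan sm {act a x | a x. a \<in> A}"
    then obtain T c where T: "T \<subseteq> {act a x | a x. a \<in> A}" and y: "y = (\<Sum>s\<in>T. sm (c s) s)"
      unfolding cspan_def by auto
    have "sm (c s) s \<in> closure (fin_supported act)" if "s \<in> T" for s
    proof -
      obtain a x where a: "a \<in> A" and s: "s = act a x" using T \<open>s \<in> T\<close> by auto
      have "sm (c s) s = act (\<lambda>n. c s * a n) x" unfolding s by (rule act_cmult[OF a, symmetric])
      thus ?thesis using act_in_closure_fin_supported[OF seq_cmult_A[OF a]] by simp
    qed
    thus "y \<in> closure (fin_supported act)"
      unfolding y by (rule subspace_sum[OF subspace_closure[OF subspace_fin_supported]])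
  qed
  hence "closure (cspan sm {act a x | a x. a \<in> A}) \<subseteq> closure (fin_supported act)"
    using closure_mono[of _ "closure (fin_supported act)"] by simp
  thus ?thesis using assms unfolding essential_module_def by blast
qed

text \<open>Homogeneity can be tested on finitely supported vectors y, provided these are
  dense: a general y is compared with its truncation to the support of a nearby
  finitely supported vector.\<close>
lemma homogeneous_if_homogeneous_on_fin_supported:
  assumes dense: "closure (fin_supported act) = UNIV"
    and fin: "\<And>y z. y \<in> fin_supported act \<Longrightarrow>
       (\<And>n. norm (act (pvec n) y) \<le> norm (act (pvec n) z)) \<Longrightarrow> norm y \<le> norm z"
  shows "homogeneous_module act"
  unfolding homogeneous_module_def
proof (intro allI impI)
  fix y z assume dom: "\<forall>n. norm (act (pvec n) y) \<le> norm (act (pvec n) z)"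
  have truncation_le: "norm (act (indf F) w) \<le> norm w" if F: "finite F" for F w
    by (rule fin) (use F truncation_idem coord_truncation_le in \<open>auto simp: fin_supported_def\<close>)
  show "norm y \<le> norm z"
  proof (rule field_le_epsilon)
    fix e :: real assume e: "0 < e"
    obtain v where "v \<in> fin_supported act" and yv: "dist v y < e / 2"
      using dense e closure_approachable[of y] by (metis UNIV_I half_gt_zero)
    then obtain F where F: "finite F" and v: "act (indf F) v = v"
      unfolding fin_supported_def by blast
    define yF where "yF = act (indf F) y"
    have "norm yF \<le> norm z"
    proof (rule fin)
      show "yF \<in> fin_supported act"
        unfolding fin_supported_def yF_def using F truncation_idem by blast
      show "norm (act (pvec n) yF) \<le> norm (act (pvec n) z)" for n
        unfolding yF_def using coord_truncation_le[OF F] dom order_trans by blast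
    qed
    moreover have "y - yF = (y - v) - act (indf F) (y - v)"
      unfolding yF_def using v by (simp add: act_diff[OF indf_A[OF F]])
    hence "norm (y - yF) \<le> norm (y - v) + norm (act (indf F) (y - v))"
      by (metis norm_triangle_ineq4)
    hence "norm (y - yF) \<le> 2 * norm (y - v)" using truncation_le[OF F, of "y - v"] by simp
    moreover have "norm (y - v) < e / 2" using yv by (simp add: dist_norm norm_minus_commute)
    moreover have "norm y \<le> norm yF + norm (y - yF)" by (metis norm_triangle_sub)
    ultimately show "norm y \<le> norm z + e" by linarith
  qed
qed

lemma homogeneous_almost_dominated:
  assumes hom: "homogeneous_module act"
    and F: "finite F" and u: "act (indf F) u = u"
    and dom: "\<And>n. norm (act (pvec n) u) \<le> norm (act (pvec n) w) + \<delta>"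
    and \<delta>: "0 \<le> \<delta>" and a: "0 < a" "a < 1"
  shows "a * norm u \<le> norm w + 2 * real (card F) * (\<delta> / (1 - a))"
proof -
  define B where "B = \<delta> / (1 - a)"
  have B: "0 \<le> B" unfolding B_def using \<delta> a by simp
  \<comment> \<open>the coordinates where w fails to dominate the rescaled u are all small\<close>
  define H where "H = {n \<in> F. norm (act (pvec n) w) < a * norm (act (pvec n) u)}"
  have H: "finite H" "H \<subseteq> F" unfolding H_def using F by auto
  have small_u: "norm (act (pvec n) u) \<le> B" and small_w: "norm (act (pvec n) w) \<le> B"
    if "n \<in> H" for n
  proof -
    have lt: "norm (act (pvec n) w) < a * norm (act (pvec n) u)" using that H_def by simp
    hence "(1 - a) * norm (act (pvec n) u) \<le> \<delta>" using dom[of n] by (simp add: algebra_simps)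
    thus u: "norm (act (pvec n) u) \<le> B" unfolding B_def using a by (simp add: field_simps)
    have "a * norm (act (pvec n) u) \<le> norm (act (pvec n) u)"
      using a by (simp add: mult_left_le_one_le)
    thus "norm (act (pvec n) w) \<le> B" using u lt by linarith
  qed
  \<comment> \<open>replacing those coordinates of w by the ones of u yields a dominating vector\<close>
  define w' where "w' = w - act (indf H) w + act (indf H) u"
  have coord_w': "act (pvec n) w' = (if n \<in> H then act (pvec n) u else act (pvec n) w)" for n
    unfolding w'_def by (simp add: act_add[OF pvec_A] act_diff[OF pvec_A] act_pvec_indf[OF H(1)])
  have "norm (a *\<^sub>R u) \<le> norm w'"
    using hom unfolding homogeneous_module_def
  proof (elim allE impE, intro allI)
    fix n
    have "norm (act (pvec n) (a *\<^sub>R u)) = a * norm (act (pvec n) u)"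
      using a by (simp add: act_scaleR[OF pvec_A])
    moreover have "act (pvec n) u = 0" if "n \<notin> F"
      using act_pvec_indf[OF F, of n u] u that by simp
    ultimately show "norm (act (pvec n) (a *\<^sub>R u)) \<le> norm (act (pvec n) w')"
      using a coord_w'[of n] unfolding H_def by (auto simp: not_less mult_left_le_one_le)
  qed
  hence "a * norm u \<le> norm w'" using a by simp
  moreover have "norm w' \<le> norm (w - act (indf H) w) + norm (act (indf H) u)"
    unfolding w'_def by (rule norm_triangle_ineq)
  moreover have "norm (w - act (indf H) w) \<le> norm w + norm (act (indf H) w)"
    by (rule norm_triangle_ineq4)
  moreover have "real (card H) * B \<le> real (card F) * B"
    using card_mono[OF F H(2)] B by (simp add: mult_right_mono)
  moreover have "norm (act (indf H) w) \<le> real (card H) * B"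
    using norm_act_indf_le[OF H(1) small_w] .
  moreover have "norm (act (indf H) u) \<le> real (card H) * B"
    using norm_act_indf_le[OF H(1) small_u] .
  ultimately have "a * norm u \<le> norm w + 2 * (real (card F) * B)" by linarith
  thus ?thesis unfolding B_def by (simp add: mult.assoc)
qed

end

locale seq_module_completion =
  fixes A :: "(nat \<Rightarrow> complex) set" and nA :: "(nat \<Rightarrow> complex) \<Rightarrow> real"
    and sm :: "complex \<Rightarrow> 'x::real_normed_vector \<Rightarrow> 'x"
    and act :: "(nat \<Rightarrow> complex) \<Rightarrow> 'x \<Rightarrow> 'x"
    and smY :: "complex \<Rightarrow> 'y::banach \<Rightarrow> 'y"
    and actY :: "(nat \<Rightarrow> complex) \<Rightarrow> 'y \<Rightarrow> 'y"
    and J :: "'x \<Rightarrow> 'y"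
  assumes alg: "seq_algebra A nA" and mdl: "normed_module A nA sm act"
    and compl: "module_completion A nA sm act smY actY J"

sublocale seq_module_completion \<subseteq> X: seq_module A nA sm act
  using alg mdl by unfold_locales
sublocale seq_module_completion \<subseteq> Y: seq_module A nA smY actY
  using alg compl unfolding module_completion_def by unfold_locales auto

context seq_module_completion
begin

lemma J_add: "J (x + y) = J x + J y"
  using compl unfolding module_completion_def by blast

lemma J_sm: "J (sm c x) = smY c (J x)"
  using compl unfolding module_completion_def by blast

lemma J_norm: "norm (J x) = norm x"
  using compl unfolding module_completion_def by blast

lemma J_act: "a \<in> A \<Longrightarrow> actY a (J x) = J (act a x)"
  using compl unfolding module_completion_def by blast

lemma J_dense: "closure (range J) = UNIV"
  using compl unfolding module_completion_def by blast

lemma J_bounded_linear: "bounded_linear J"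
proof
  show "J (x + y) = J x + J y" for x y by (rule J_add)
  show "J (r *\<^sub>R x) = r *\<^sub>R J x" for r x
    using J_sm[of "complex_of_real r" x] by (simp add: X.sm_real Y.sm_real)
  show "\<exists>K. \<forall>x. norm (J x) \<le> norm x * K" by (intro exI[of _ 1]) (simp add: J_norm)
qed

lemma J_inj: "inj J"
proof (rule injI)
  fix x y assume "J x = J y"
  hence "norm (J (x - y)) = 0" by (simp add: linear_diff[OF bounded_linear.linear[OF J_bounded_linear]])
  thus "x = y" by (simp add: J_norm)
qed

lemma J_approx: "e > 0 \<Longrightarrow> \<exists>x. norm (J x - y) < e"
  using J_dense closure_approachable[of y "range J"] by (auto simp: dist_norm)

lemma J_coord: "norm (actY (pvec n) (J x)) = norm (act (pvec n) x)"
  by (simp add: J_act[OF X.pvec_A] J_norm)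

lemma J_cspan: "J ` cspan sm S \<subseteq> cspan smY (J ` S)"
proof
  fix y assume "y \<in> J ` cspan sm S"
  then obtain x where x: "x \<in> cspan sm S" and y: "y = J x" by blast
  obtain T c where T: "finite T" "T \<subseteq> S" and x: "x = (\<Sum>s\<in>T. sm (c s) s)"
    using x unfolding cspan_def by blast
  have lin: "linear J" by (rule bounded_linear.linear[OF J_bounded_linear])
  have "y = (\<Sum>s\<in>T. smY (c s) (J s))" unfolding y x linear_sum[OF lin] by (simp add: J_sm)
  also have "\<dots> = (\<Sum>t\<in>J ` T. smY (c (inv_into T J t)) t)"
  proof (rule sum.reindex_cong[symmetric])
    show "inj_on J T" using J_inj by (rule inj_on_subset) simp
    thus "smY (c (inv_into T J (J s))) (J s) = smY (c s) (J s)" if "s \<in> T" for s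
      using that by simp
  qed simp
  finally have "y = (\<Sum>t\<in>J ` T. smY (c (inv_into T J t)) t)" .
  moreover have "finite (J ` T)" "J ` T \<subseteq> J ` S" using T by auto
  ultimately show "y \<in> cspan smY (J ` S)"
    unfolding cspan_def by (intro CollectI exI[of _ "J ` T"] exI[of _ "\<lambda>t. c (inv_into T J t)"]) simp
qed

text \<open>First half of the theorem: the image under J of the dense span of the generators
  of X is dense in Y and lies in the span of the generators of Y.\<close>
lemma essential_completion:
  assumes ess: "essential_module A sm act"
  shows "essential_module A smY actY"
proof -
  let ?CX = "cspan sm {act a x | a x. a \<in> A}"
  let ?CY = "cspan smY {actY a y | a y. a \<in> A}"
  have gens: "J ` {act a x | a x. a \<in> A} \<subseteq> {actY a y | a y. a \<in> A}"
  proof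
    fix t assume "t \<in> J ` {act a x | a x. a \<in> A}"
    then obtain a x where "a \<in> A" "t = J (act a x)" by blast
    hence "t = actY a (J x)" by (simp add: J_act)
    thus "t \<in> {actY a y | a y. a \<in> A}" using \<open>a \<in> A\<close> by blast
  qed
  have "range J = J ` closure ?CX" using ess unfolding essential_module_def by simp
  also have "\<dots> \<subseteq> closure (J ` ?CX)"
    by (rule closure_bounded_linear_image_subset[OF J_bounded_linear])
  also have "\<dots> \<subseteq> closure ?CY"
  proof (rule closure_mono)
    have "J ` ?CX \<subseteq> cspan smY (J ` {act a x | a x. a \<in> A})" by (rule J_cspan)
    also have "\<dots> \<subseteq> ?CY" using gens by (rule cspan_mono)
    finally show "J ` ?CX \<subseteq> ?CY" .
  qed
  finally have "closure (range J) \<subseteq> closure ?CY"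
    using closure_mono[of "range J" "closure ?CY"] by simp
  thus ?thesis unfolding essential_module_def using J_dense by blast
qed

text \<open>A vector of Y supported in F is approximated by images of vectors of X that are
  supported in F (project an arbitrary approximant onto F).\<close>
lemma approx_with_support:
  assumes F: "finite F" and y: "actY (indf F) y = y" and e: "e > 0"
  shows "\<exists>u. act (indf F) u = u \<and> norm (J u - y) < e"
proof -
  define K where "K = nA (indf F)"
  have K: "0 \<le> K" unfolding K_def by (rule X.nA_nonneg[OF X.indf_A[OF F]])
  obtain u0 where u0: "norm (J u0 - y) < e / (K + 1)"
    using J_approx[of "e / (K + 1)"] e K by auto
  define u where "u = act (indf F) u0"
  have u: "act (indf F) u = u" unfolding u_def by (rule X.truncation_idem[OF F])
  have "J u - y = actY (indf F) (J u0 - y)"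
    unfolding u_def using y by (simp add: J_act[OF X.indf_A[OF F]] Y.act_diff[OF Y.indf_A[OF F]])
  hence "norm (J u - y) \<le> K * norm (J u0 - y)"
    unfolding K_def by (simp add: Y.act_norm[OF Y.indf_A[OF F]])
  also have "\<dots> \<le> K * (e / (K + 1))" using u0 K by (intro mult_left_mono) auto
  also have "\<dots> = e * (K / (K + 1))" by simp
  also have "\<dots> < e * 1"
    using K by (intro mult_strict_left_mono[OF _ e]) (simp add: divide_less_eq_1_pos add_nonneg_pos)
  finally show ?thesis using u by auto
qed

text \<open>Homogeneity of Y on finitely supported vectors: approximate y and z by vectors
  of X, apply the stability of homogeneity in X, and let first the error and then
  the shrinking factor tend to their limits.\<close>
lemma completion_homogeneous_on_fin_supported:
  assumes hom: "homogeneous_module act"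
    and y: "y \<in> fin_supported actY"
    and dom: "\<And>n. norm (actY (pvec n) y) \<le> norm (actY (pvec n) z)"
  shows "norm y \<le> norm z"
proof -
  obtain F where F: "finite F" and yF: "actY (indf F) y = y"
    using y unfolding fin_supported_def by blast
  have approx: "a * norm y \<le> norm z + (2 + C) * \<epsilon>"
    if a: "0 < a" "a < 1" and C: "C = 4 * real (card F) / (1 - a)" and \<epsilon>: "\<epsilon> > 0" for a C \<epsilon>
  proof -
    obtain u where u: "act (indf F) u = u" and uy: "norm (J u - y) < \<epsilon>"
      using approx_with_support[OF F yF \<epsilon>] by blast
    obtain w where wz: "norm (J w - z) < \<epsilon>" using J_approx[OF \<epsilon>] by blast
    have dom_uw: "norm (act (pvec n) u) \<le> norm (act (pvec n) w) + 2 * \<epsilon>" for n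
    proof -
      have "norm (act (pvec n) u) \<le> norm (actY (pvec n) y) + norm (J u - y)"
        using Y.coord_le_shift[of n "J u" y] by (simp add: J_coord)
      moreover have "norm (actY (pvec n) z) \<le> norm (act (pvec n) w) + norm (J w - z)"
        using Y.coord_le_shift[of n z "J w"] by (simp add: J_coord norm_minus_commute)
      ultimately show ?thesis using dom[of n] uy wz by linarith
    qed
    have "a * norm u \<le> norm w + 2 * real (card F) * (2 * \<epsilon> / (1 - a))"
      by (rule X.homogeneous_almost_dominated[OF hom F u dom_uw _ a]) (use \<epsilon> in simp)
    also have "2 * real (card F) * (2 * \<epsilon> / (1 - a)) = C * \<epsilon>" unfolding C by simp
    finally have au: "a * norm u \<le> norm w + C * \<epsilon>" .
    have "norm y \<le> norm u + \<epsilon>"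
      using norm_triangle_ineq2[of y "J u"] uy by (simp add: J_norm norm_minus_commute)
    hence "a * norm y \<le> a * norm u + a * \<epsilon>"
      using a by (simp add: distrib_left[symmetric])
    moreover have "a * \<epsilon> \<le> \<epsilon>" using a \<epsilon> by simp
    moreover have "norm w \<le> norm z + \<epsilon>"
      using norm_triangle_ineq2[of "J w" z] wz by (simp add: J_norm)
    ultimately show ?thesis using au by (simp add: distrib_right)
  qed
  show ?thesis
  proof (rule field_le_mult_one_interval)
    fix a :: real assume a: "0 < a" "a < 1"
    define C where "C = 4 * real (card F) / (1 - a)"
    have C: "0 \<le> C" unfolding C_def using a by simp
    show "a * norm y \<le> norm z"
    proof (rule field_le_epsilon)
      fix e :: real assume e: "0 < e"
      have "0 < e / (2 + C)" using e C by simp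
      hence "a * norm y \<le> norm z + (2 + C) * (e / (2 + C))" by (rule approx[OF a C_def])
      thus "a * norm y \<le> norm z + e" using C by simp
    qed
  qed
qed

text \<open>Second half of the theorem: since Y is essential, its finitely supported vectors
  are dense, and homogeneity on them extends to all of Y.\<close>
lemma homogeneous_completion:
  assumes ess: "essential_module A sm act" and hom: "homogeneous_module act"
  shows "homogeneous_module actY"
  using Y.essential_imp_fin_supported_dense[OF essential_completion[OF ess]]
    completion_homogeneous_on_fin_supported[OF hom]
  by (rule Y.homogeneous_if_homogeneous_on_fin_supported)

end

theorem proposition1p6:
  fixes A :: "(nat \<Rightarrow> complex) set" and nA :: "(nat \<Rightarrow> complex) \<Rightarrow> real"
    and sm :: "complex \<Rightarrow> 'x::real_normed_vector \<Rightarrow> 'x"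
    and act :: "(nat \<Rightarrow> complex) \<Rightarrow> 'x \<Rightarrow> 'x"
    and smY :: "complex \<Rightarrow> 'y::banach \<Rightarrow> 'y"
    and actY :: "(nat \<Rightarrow> complex) \<Rightarrow> 'y \<Rightarrow> 'y"
    and J :: "'x \<Rightarrow> 'y"
  assumes "seq_algebra A nA"
    and "normed_module A nA sm act"
    and "essential_module A sm act"
    and "homogeneous_module act"
    and "module_completion A nA sm act smY actY J"
  shows "essential_module A smY actY \<and> homogeneous_module actY"
proof -
  interpret seq_module_completion A nA sm act smY actY J
    using assms(1,2,5) by unfold_locales
  show ?thesis
    using essential_completion[OF assms(3)] homogeneous_completion[OF assms(3,4)] by blast
qed

end
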